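(* Let $\mathbb Q$ be a probability measure on $(\Omega,\mathcal F)$ equivalent to $\mathbb P$, and let $(\mathcal B_n)_{n\in\mathbb N_0}$ be $\sigma$-subfields. Then $\mathcal B_n\to\mathcal B_0$ weakly under $\mathbb P$ if and only if $\mathcal B_n\to\mathcal B_0$ weakly under $\mathbb Q$.
   Context: Let $(\Omega,\mathcal F,\mathbb P)$ be a (not necessarily complete) probability space and $\mathcal N:=\{F\in\mathcal F:\mathbb P(F)=0\}$. A $\sigma$-subfield is a sub-$\sigma$-field $\mathcal A\subset\mathcal F$ with $\mathcal A=\sigma(\mathcal A\cup\mathcal N)$ (this notion is the same for $\mathbb P$ and any $\mathbb Q\sim\mathbb P$). For a probability measure $\mathbb R\sim\mathbb P$ and a $\sigma$-subfield $\mathcal A$, $\mathbb R_{\mathcal A}f:=\mathbb E^{\mathbb R}[f\mid\mathcal A]$. We say $\mathcal B_n\to\mathcal B_0$ weakly under $\mathbb R$ if $\mathbb R_{\mathcal B_n}\mathbb 1_A\to\mathbb 1_A$ in $\mathbb R$-probability for every $A\in\mathcal B_0$. *)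

theory Defs
  imports "HOL-Probability.Probability"
begin

definition sigma_subfield :: "'a measure \<Rightarrow> 'a measure \<Rightarrow> bool" where
  "sigma_subfield M A \<longleftrightarrow> subalgebra M A \<and>
     sets A = sigma_sets (space M) (sets A \<union> null_sets M)"

definition conv_in_prob :: "'a measure \<Rightarrow> (nat \<Rightarrow> 'a \<Rightarrow> real) \<Rightarrow> ('a \<Rightarrow> real) \<Rightarrow> bool" where
  "conv_in_prob R X Y \<longleftrightarrow>
     (\<forall>e>0. (\<lambda>n. measure R {x \<in> space R. \<bar>X n x - Y x\<bar> > e}) \<longlonglongrightarrow> 0)"

definition weak_conv_subfields :: "'a measure \<Rightarrow> (nat \<Rightarrow> 'a measure) \<Rightarrow> bool" where
  "weak_conv_subfields R B \<longleftrightarrow>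
     (\<forall>A \<in> sets (B 0). conv_in_prob R (\<lambda>n. real_cond_exp R (B n) (indicator A)) (indicator A))"

end

theory Submission
  imports Defs
begin

text \<open>Weak convergence under a finite measure R is a property of R-measures of sets only:
  \<open>E\<^sup>R[1\<^sub>A | B\<^sub>n] \<rightarrow> 1\<^sub>A\<close> in R-probability iff there are \<open>A\<^sub>n \<in> B\<^sub>n\<close> with \<open>R(A \<triangle> A\<^sub>n) \<rightarrow> 0\<close>.
  One direction takes \<open>A\<^sub>n = {E\<^sup>R[1\<^sub>A | B\<^sub>n] > 1/2}\<close>; for the other, off \<open>A \<triangle> A\<^sub>n\<close> the deviation
  \<open>|E\<^sup>R[1\<^sub>A | B\<^sub>n] - 1\<^sub>A|\<close> is bounded by \<open>E\<^sup>R[1\<^bsub>A \<triangle> A\<^sub>n\<^esub> | B\<^sub>n]\<close>, whose superlevel sets are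
  small by Markov's inequality. Finally, for equivalent finite measures P and Q, \<open>P(C\<^sub>n) \<rightarrow> 0\<close>
  forces \<open>Q(C\<^sub>n) \<rightarrow> 0\<close>: otherwise a subsequence with summable P-measures has, by Borel-Cantelli,
  a P-null and hence Q-null limsup, which nevertheless carries Q-measure at least some \<open>\<epsilon> > 0\<close>.\<close>

lemma measure_limsup_ge:
  assumes "finite_measure M" and D: "\<And>k. D k \<in> sets M" and e: "\<And>k. e \<le> measure M (D k)"
  shows "e \<le> measure M (limsup D)"
proof -
  interpret finite_measure M by fact
  define E where "E m = (\<Union>k\<in>{m..}. D k)" for m
  have E: "range E \<subseteq> sets M" "decseq E"
    using D unfolding E_def decseq_def by (auto 4 3 intro: order_trans)
  have "(\<lambda>m. measure M (E m)) \<longlonglongrightarrow> measure M (limsup D)"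
    using Lim_measure_decseq[OF E] by (simp add: limsup_INF_SUP E_def)
  moreover have "e \<le> measure M (E m)" for m
    using E(1) by (intro order_trans[OF e[of m]] finite_measure_mono) (auto simp: E_def)
  ultimately show ?thesis
    by (intro LIMSEQ_le_const) auto
qed

lemma absolutely_continuous_measure_tendsto_0:
  assumes "finite_measure M" "finite_measure N" "sets N = sets M" "absolutely_continuous M N"
    and C: "\<And>n. C n \<in> sets M" and lim: "(\<lambda>n. measure M (C n)) \<longlonglongrightarrow> 0"
  shows "(\<lambda>n. measure N (C n)) \<longlonglongrightarrow> 0"
proof (rule ccontr)
  interpret M: finite_measure M by fact
  assume "\<not> ?thesis"
  then obtain e where "e > 0" and frequently_large: "\<And>m. \<exists>n\<ge>m. e \<le> measure N (C n)"
    unfolding LIMSEQ_def dist_real_def by (auto simp: not_less)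
  have "\<exists>n. e \<le> measure N (C n) \<and> measure M (C n) \<le> (1/2)^k" for k :: nat
  proof -
    obtain m where "\<And>n. n \<ge> m \<Longrightarrow> measure M (C n) < (1/2)^k"
      using lim unfolding LIMSEQ_def dist_real_def by (metis abs_of_nonneg diff_zero
          measure_nonneg zero_less_divide_1_iff zero_less_numeral zero_less_power)
    with frequently_large[of m] show ?thesis by force
  qed
  then obtain r where large: "\<And>k. e \<le> measure N (C (r k))"
    and small: "\<And>k. measure M (C (r k)) \<le> (1/2)^k"
    by metis
  have "summable (\<lambda>k. measure M (C (r k)))"
    by (rule summable_comparison_test'[where g="\<lambda>k. (1/2)^k" and N=0]) (auto simp: small)
  then have "limsup (\<lambda>k. C (r k)) \<in> null_sets M"
    by (intro borel_cantelli_limsup1) (auto simp: C M.emeasure_eq_measure)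
  then have "limsup (\<lambda>k. C (r k)) \<in> null_sets N"
    using assms(4) unfolding absolutely_continuous_def by auto
  then have "measure N (limsup (\<lambda>k. C (r k))) = 0"
    by (simp add: measure_def null_setsD1)
  moreover have "e \<le> measure N (limsup (\<lambda>k. C (r k)))"
    using assms(2,3) C large by (intro measure_limsup_ge) auto
  ultimately show False
    using \<open>e > 0\<close> by simp
qed

context sigma_finite_subalgebra
begin

lemma abs_real_cond_exp_le:
  assumes "integrable M f"
  shows "AE x in M. \<bar>real_cond_exp M F f x\<bar> \<le> real_cond_exp M F (\<lambda>x. \<bar>f x\<bar>) x"
proof -
  have "AE x in M. real_cond_exp M F f x \<le> real_cond_exp M F (\<lambda>x. \<bar>f x\<bar>) x"
    by (rule real_cond_exp_mono) (use assms in auto)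
  moreover have "AE x in M. real_cond_exp M F (\<lambda>x. -1 * \<bar>f x\<bar>) x \<le> real_cond_exp M F f x"
    by (rule real_cond_exp_mono) (use assms in auto)
  moreover have "AE x in M. real_cond_exp M F (\<lambda>x. -1 * \<bar>f x\<bar>) x
      = -1 * real_cond_exp M F (\<lambda>x. \<bar>f x\<bar>) x"
    by (rule real_cond_exp_cmult) (use assms in auto)
  ultimately show ?thesis
    by eventually_elim auto
qed

end

context finite_measure_subalgebra
begin

lemma measure_real_cond_exp_indicator_ge:
  assumes [measurable]: "D \<in> sets M" and "0 < e"
  shows "measure M {x\<in>space M. e \<le> real_cond_exp M F (indicator D) x} \<le> measure M D / e"
proof -
  have D: "integrable M (indicator D :: _ \<Rightarrow> real)"
    by (rule integrable_real_indicator) (auto simp: emeasure_eq_measure)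
  have "measure M {x\<in>space M. e \<le> real_cond_exp M F (indicator D) x}
      \<le> (\<integral>x. real_cond_exp M F (indicator D) x \<partial>M) / e"
    by (rule integral_Markov_inequality_measure[where A="space M"])
       (use D \<open>0 < e\<close> in \<open>auto intro: real_cond_exp_int(1) real_cond_exp_pos\<close>)
  also have "(\<integral>x. real_cond_exp M F (indicator D) x \<partial>M) = measure M D"
    using real_cond_exp_int(2)[OF D] sets.sets_into_space[OF assms(1)]
    by (simp add: Int_absorb2)
  finally show ?thesis .
qed

lemma measure_real_cond_exp_indicator_deviation_le:
  assumes [measurable]: "A \<in> sets M" "A' \<in> sets F" and "0 < e"
  shows "measure M {x\<in>space M. e < \<bar>real_cond_exp M F (indicator A) x - indicator A x\<bar>}
    \<le> measure M (sym_diff A A') + measure M (sym_diff A A') / e"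
proof -
  let ?D = "sym_diff A A'"
  have A'M [measurable]: "A' \<in> sets M"
    using subalg assms(2) unfolding subalgebra_def by auto
  have int: "integrable M (indicator S :: _ \<Rightarrow> real)" if "S \<in> sets M" for S
    by (rule integrable_real_indicator) (use that in \<open>auto simp: emeasure_eq_measure\<close>)
  have abs_diff: "(\<lambda>x. \<bar>indicator A x - indicator A' x\<bar>) = (indicator ?D :: _ \<Rightarrow> real)"
    by (auto simp: indicator_def)
  have "AE x in M. real_cond_exp M F (\<lambda>x. indicator A x - indicator A' x) x
      = real_cond_exp M F (indicator A) x - real_cond_exp M F (indicator A') x"
    by (rule real_cond_exp_diff) (auto intro: int)
  moreover have "AE x in M. real_cond_exp M F (indicator A') x = indicator A' x"
    by (rule real_cond_exp_F_meas) (auto intro: int)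
  moreover have "AE x in M. \<bar>real_cond_exp M F (\<lambda>x. indicator A x - indicator A' x) x\<bar>
      \<le> real_cond_exp M F (indicator ?D) x"
    using abs_real_cond_exp_le[of "\<lambda>x. indicator A x - indicator A' x"]
    by (simp add: abs_diff int)
  \<comment> \<open>Off \<open>A \<triangle> A'\<close> the indicators of \<open>A\<close> and \<open>A'\<close> agree, so the deviation is \<open>|E[1\<^sub>A - 1\<^bsub>A'\<^esub> | F]|\<close>.\<close>
  ultimately have "AE x in M. x \<in> {x\<in>space M. e < \<bar>real_cond_exp M F (indicator A) x - indicator A x\<bar>}
      \<longrightarrow> x \<in> ?D \<union> {x\<in>space M. e \<le> real_cond_exp M F (indicator ?D) x}"
    by eventually_elim (auto simp: indicator_def of_bool_def split: if_splits)
  then have "measure M {x\<in>space M. e < \<bar>real_cond_exp M F (indicator A) x - indicator A x\<bar>}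
      \<le> measure M (?D \<union> {x\<in>space M. e \<le> real_cond_exp M F (indicator ?D) x})"
    by (rule finite_measure_mono_AE) measurable
  also have "\<dots> \<le> measure M ?D + measure M {x\<in>space M. e \<le> real_cond_exp M F (indicator ?D) x}"
    by (rule measure_Un_le) measurable
  also have "\<dots> \<le> measure M ?D + measure M ?D / e"
    using measure_real_cond_exp_indicator_ge[of ?D e] \<open>0 < e\<close> by simp
  finally show ?thesis .
qed

end

lemma measure_sym_diff_superlevel_le:
  fixes f :: "'a \<Rightarrow> real"
  assumes "finite_measure M" and [measurable]: "A \<in> sets M" "f \<in> borel_measurable M"
  shows "measure M (sym_diff A {x\<in>space M. 1/2 < f x})
    \<le> measure M {x\<in>space M. 1/4 < \<bar>f x - indicator A x\<bar>}"
proof (rule finite_measure.finite_measure_mono[OF assms(1)])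
  show "sym_diff A {x\<in>space M. 1/2 < f x} \<subseteq> {x\<in>space M. 1/4 < \<bar>f x - indicator A x\<bar>}"
    using sets.sets_into_space[OF assms(2)] by (auto simp: indicator_def)
qed measurable

definition measure_approximable :: "'a measure \<Rightarrow> (nat \<Rightarrow> 'a measure) \<Rightarrow> 'a set \<Rightarrow> bool" where
  "measure_approximable M B A \<longleftrightarrow>
     (\<exists>A'. (\<forall>n. A' n \<in> sets (B n)) \<and> (\<lambda>n. measure M (sym_diff A (A' n))) \<longlonglongrightarrow> 0)"

lemma conv_in_prob_real_cond_exp_indicator_iff:
  assumes "finite_measure M" and sub: "\<And>n. subalgebra M (B n)" and [measurable]: "A \<in> sets M"
  shows "conv_in_prob M (\<lambda>n. real_cond_exp M (B n) (indicator A)) (indicator A)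
    \<longleftrightarrow> measure_approximable M B A"
proof
  let ?f = "\<lambda>n. real_cond_exp M (B n) (indicator A)"
  assume "conv_in_prob M ?f (indicator A)"
  then have lim: "(\<lambda>n. measure M {x\<in>space M. 1/4 < \<bar>?f n x - indicator A x\<bar>}) \<longlonglongrightarrow> 0"
    unfolding conv_in_prob_def by (auto dest: spec[of _ "1/4 :: real"])
  define A' where "A' n = {x\<in>space (B n). 1/2 < ?f n x}" for n
  have "A' n \<in> sets (B n)" for n
    unfolding A'_def by measurable
  moreover have "measure M (sym_diff A (A' n))
      \<le> measure M {x\<in>space M. 1/4 < \<bar>?f n x - indicator A x\<bar>}" for n
  proof -
    have "space (B n) = space M"
      using sub unfolding subalgebra_def by auto
    then show ?thesis
      using measure_sym_diff_superlevel_le[OF assms(1), of A "?f n"] by (simp add: A'_def)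
  qed
  then have "(\<lambda>n. measure M (sym_diff A (A' n))) \<longlonglongrightarrow> 0"
    by (intro tendsto_sandwich[OF _ _ tendsto_const lim] always_eventually allI) auto
  ultimately show "measure_approximable M B A"
    unfolding measure_approximable_def by blast
next
  assume "measure_approximable M B A"
  then obtain A' where A': "\<And>n. A' n \<in> sets (B n)"
    and lim: "(\<lambda>n. measure M (sym_diff A (A' n))) \<longlonglongrightarrow> 0"
    unfolding measure_approximable_def by blast
  show "conv_in_prob M (\<lambda>n. real_cond_exp M (B n) (indicator A)) (indicator A)"
    unfolding conv_in_prob_def
  proof (intro allI impI)
    fix e :: real assume "0 < e"
    have bound: "measure M {x\<in>space M. e < \<bar>real_cond_exp M (B n) (indicator A) x - indicator A x\<bar>}
        \<le> measure M (sym_diff A (A' n)) + measure M (sym_diff A (A' n)) / e" for n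
    proof -
      interpret finite_measure_subalgebra M "B n"
        using assms(1) sub
        by (simp add: finite_measure_subalgebra_def finite_measure_subalgebra_axioms_def)
      show ?thesis
        by (rule measure_real_cond_exp_indicator_deviation_le[OF assms(3) A' \<open>0 < e\<close>])
    qed
    have "(\<lambda>n. measure M (sym_diff A (A' n)) + measure M (sym_diff A (A' n)) / e) \<longlonglongrightarrow> 0 + 0 / e"
      by (intro tendsto_intros lim) (use \<open>0 < e\<close> in simp)
    then have "(\<lambda>n. measure M (sym_diff A (A' n)) + measure M (sym_diff A (A' n)) / e) \<longlonglongrightarrow> 0"
      by simp
    from tendsto_sandwich[OF _ _ tendsto_const this]
    show "(\<lambda>n. measure M {x\<in>space M. e < \<bar>real_cond_exp M (B n) (indicator A) x - indicator A x\<bar>})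
        \<longlonglongrightarrow> 0"
      using bound by (auto intro!: always_eventually)
  qed
qed

lemma measure_approximable_absolutely_continuous:
  assumes "finite_measure M" "finite_measure N" "sets N = sets M" "absolutely_continuous M N"
    and "\<And>n. sets (B n) \<subseteq> sets M" "A \<in> sets M"
    and "measure_approximable M B A"
  shows "measure_approximable N B A"
proof -
  obtain A' where A': "\<And>n. A' n \<in> sets (B n)"
    and lim: "(\<lambda>n. measure M (sym_diff A (A' n))) \<longlonglongrightarrow> 0"
    using assms(7) unfolding measure_approximable_def by blast
  have "A' n \<in> sets M" for n
    using A' assms(5) by blast
  then have "sym_diff A (A' n) \<in> sets M" for n
    using assms(6) by auto
  from absolutely_continuous_measure_tendsto_0[OF assms(1-4) this lim]
  show ?thesis
    using A' unfolding measure_approximable_def by blast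
qed

theorem proposition4p3:
  fixes P Q :: "'a measure" and B :: "nat \<Rightarrow> 'a measure"
  assumes "prob_space P" and "prob_space Q"
    and "sets Q = sets P"
    and "null_sets Q = null_sets P"
    and "\<And>n. sigma_subfield P (B n)"
  shows "weak_conv_subfields P B \<longleftrightarrow> weak_conv_subfields Q B"
  unfolding weak_conv_subfields_def
proof (intro ball_cong refl)
  have finite: "finite_measure P" "finite_measure Q"
    using assms(1,2) by (auto intro: prob_space.finite_measure)
  have subP: "subalgebra P (B n)" for n
    using assms(5) unfolding sigma_subfield_def by auto
  then have subQ: "subalgebra Q (B n)" for n
    using assms(3) sets_eq_imp_space_eq[OF assms(3)] unfolding subalgebra_def by auto
  have ac: "absolutely_continuous P Q" "absolutely_continuous Q P"
    using assms(4) by (simp_all add: absolutely_continuous_def)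
  fix A assume "A \<in> sets (B 0)"
  then have A: "A \<in> sets P" "A \<in> sets Q"
    using subP[of 0] assms(3) unfolding subalgebra_def by auto
  have "conv_in_prob P (\<lambda>n. real_cond_exp P (B n) (indicator A)) (indicator A)
      \<longleftrightarrow> measure_approximable P B A"
    by (rule conv_in_prob_real_cond_exp_indicator_iff[OF finite(1) subP A(1)])
  also have "\<dots> \<longleftrightarrow> measure_approximable Q B A"
    using measure_approximable_absolutely_continuous[OF finite assms(3) ac(1) _ A(1)]
      measure_approximable_absolutely_continuous[OF finite(2,1) assms(3)[symmetric] ac(2) _ A(2)]
      subP subQ unfolding subalgebra_def by blast
  also have "\<dots> \<longleftrightarrow> conv_in_prob Q (\<lambda>n. real_cond_exp Q (B n) (indicator A)) (indicator A)"
    by (rule conv_in_prob_real_cond_exp_indicator_iff[OF finite(2) subQ A(2), symmetric])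
  finally show "conv_in_prob P (\<lambda>n. real_cond_exp P (B n) (indicator A)) (indicator A)
      \<longleftrightarrow> conv_in_prob Q (\<lambda>n. real_cond_exp Q (B n) (indicator A)) (indicator A)" .
qed

end
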